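(* Let $g(x)=(x+1)\ln(x+1)-x\ln x$. For $\eta\in[0,1)$, $N_S>0$ and $\lambda\in(0,1]$ with $\lambda(1-\eta)N_S\ge 2$, \[ \big[g(N_S)+g(\eta N_S)-g((1-\eta)N_S)\big]-\big[g(\lambda N_S)+g(\eta N_S)-g((1-\eta)\lambda N_S)\big]\le \frac{5}{6\lambda N_S(1-\eta)} . \] Consequently, for $\epsilon>0$, choosing $\lambda=5/[6\epsilon N_S(1-\eta)\ln 2]$, whenever $\lambda(1-\eta)N_S\ge2$, makes the limited-entanglement classical rate $g_2(\lambda N_S)+g_2(\eta N_S)-g_2((1-\eta)\lambda N_S)$ within $\epsilon$ bits of the entanglement-assisted classical capacity $g_2(N_S)+g_2(\eta N_S)-g_2((1-\eta)N_S)$, where $g_2(x)=(x+1)\log_2(x+1)-x\log_2 x$.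
   Context: These quantities refer to a pure-loss bosonic channel with transmissivity $\eta$ and mean input photon number constraint $N_S$: $g(N_S)+g(\eta N_S)-g((1-\eta)N_S)$ is its entanglement-assisted classical capacity, and $g(\lambda N_S)+g(\eta N_S)-g((1-\eta)\lambda N_S)$ is the classical rate achievable by a trade-off code dedicating a fraction $\lambda$ of the photons to shared entanglement. *)

theory Defs
  imports Complex_Main
begin

text \<open>g(x) = (x+1) ln(x+1) - x ln x, with the convention 0 ln 0 = 0
  (Isabelle has ln 0 = 0, so g 0 = 0 as intended).\<close>
definition g :: "real \<Rightarrow> real" where
  "g x = (x + 1) * ln (x + 1) - x * ln x"

definition g2 :: "real \<Rightarrow> real" where
  "g2 x = (x + 1) * log 2 (x + 1) - x * log 2 x"

end

theory Submission
  imports Defs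
begin

text \<open>Writing \<open>a = 1 - \<eta>\<close>, the capacity loss is \<open>G(N\<^sub>S) - G(\<lambda> N\<^sub>S)\<close> for
  \<open>G(x) = g x - g (a x)\<close>. Since \<open>g'(x) = ln (1 + 1/x)\<close>, second and third order Taylor
  bounds for \<open>ln (1 + u)\<close> give \<open>0 \<le> G'(x) \<le> 2/(3 a x\<^sup>2)\<close> for \<open>x \<ge> 2\<close>; integrating from
  \<open>\<lambda> N\<^sub>S\<close> to \<open>N\<^sub>S\<close> bounds the loss by \<open>2/(3 a \<lambda> N\<^sub>S) \<le> 5/(6 a \<lambda> N\<^sub>S)\<close>. If
  \<open>\<lambda> > 1\<close> the loss is nonpositive because \<open>G\<close> is nondecreasing, and the base-2 statement is
  the natural-log one divided by \<open>ln 2\<close>.\<close>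

lemma ln_one_plus_ge_quadratic:
  fixes t :: real
  assumes "0 \<le> t"
  shows "t - t^2/2 \<le> ln (1 + t)"
proof -
  let ?f = "\<lambda>t::real. ln (1 + t) - t + t^2/2"
  have "?f 0 \<le> ?f t"
  proof (rule DERIV_nonneg_imp_nondecreasing[OF assms])
    fix x :: real
    assume x: "0 \<le> x" "x \<le> t"
    have "(?f has_real_derivative 1/(1 + x) - 1 + x) (at x)"
      by (rule derivative_eq_intros refl | use x in simp)+
    moreover have "1/(1 + x) - 1 + x = x^2/(1 + x)"
      using x by (simp add: field_simps power2_eq_square)
    ultimately show "\<exists>y. (?f has_real_derivative y) (at x) \<and> 0 \<le> y"
      using x by auto
  qed
  then show ?thesis by simp
qed

lemma ln_one_plus_le_cubic:
  fixes t :: real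
  assumes "0 \<le> t"
  shows "ln (1 + t) \<le> t - t^2/2 + t^3/3"
proof -
  let ?f = "\<lambda>t::real. t - t^2/2 + t^3/3 - ln (1 + t)"
  have "?f 0 \<le> ?f t"
  proof (rule DERIV_nonneg_imp_nondecreasing[OF assms])
    fix x :: real
    assume x: "0 \<le> x" "x \<le> t"
    have "(?f has_real_derivative 1 - x + x^2 - 1/(1 + x)) (at x)"
      by (rule derivative_eq_intros refl | use x in simp)+
    moreover have "1 - x + x^2 - 1/(1 + x) = x^3/(1 + x)"
      using x by (simp add: field_simps power2_eq_square power3_eq_cube)
    ultimately show "\<exists>y. (?f has_real_derivative y) (at x) \<and> 0 \<le> y"
      using x by auto
  qed
  then show ?thesis by simp
qed

lemma g_has_real_derivative:
  fixes x :: real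
  assumes "0 < x"
  shows "(g has_real_derivative ln (1 + 1/x)) (at x)"
proof -
  have "((\<lambda>x. (x + 1) * ln (x + 1) - x * ln x) has_real_derivative
          (ln (x + 1) + (x + 1) * (1/(x + 1))) - (ln x + x * (1/x))) (at x)"
    by (rule derivative_eq_intros refl | use assms in simp)+
  moreover have "ln (1 + 1/x) = ln (x + 1) - ln x"
    using assms by (simp add: field_simps ln_div)
  ultimately show ?thesis
    using assms unfolding g_def[abs_def] by simp
qed

lemma times_ln_one_plus_inverse_mono:
  fixes u v :: real
  assumes "0 < u" "u \<le> v"
  shows "u * ln (1 + 1/u) \<le> v * ln (1 + 1/v)"
proof (rule DERIV_nonneg_imp_nondecreasing[OF assms(2)])
  fix x :: real
  assume "u \<le> x" "x \<le> v"
  with assms have x: "0 < x" by simp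
  have "((\<lambda>x. x * ln (1 + 1/x)) has_real_derivative ln (1 + 1/x) - 1/(x + 1)) (at x)"
    using x add_pos_pos[OF x mult_pos_pos[OF x x]]
    by (auto intro!: derivative_eq_intros simp: field_simps power2_eq_square)
  moreover have "1/(x + 1) \<le> ln (1 + 1/x)"
    using ln_add1_ge[of "1/x"] x by (simp add: field_simps add.commute)
  ultimately show "\<exists>y. ((\<lambda>x. x * ln (1 + 1/x)) has_real_derivative y) (at x) \<and> 0 \<le> y"
    by auto
qed

text \<open>With \<open>a = 1 - \<eta>\<close>, the difference between the two rates in the theorem is
  \<open>g_gap a N\<^sub>S - g_gap a (\<lambda> N\<^sub>S)\<close>: the term \<open>g (\<eta> N\<^sub>S)\<close> cancels.\<close>
definition g_gap :: "real \<Rightarrow> real \<Rightarrow> real" where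
  "g_gap a x = g x - g (a * x)"

lemma g_gap_has_real_derivative:
  fixes a x :: real
  assumes "0 < x" "0 < a"
  shows "(g_gap a has_real_derivative ln (1 + 1/x) - a * ln (1 + 1/(a*x))) (at x)"
proof -
  have "((\<lambda>x. g (a * x)) has_real_derivative ln (1 + 1/(a*x)) * a) (at x)"
    using DERIV_chain2[OF g_has_real_derivative DERIV_cmult[OF DERIV_ident]] assms
    by simp
  from DERIV_diff[OF g_has_real_derivative[OF assms(1)] this] show ?thesis
    unfolding g_gap_def[abs_def] by (simp add: mult.commute)
qed

lemma g_gap_derivative_nonneg:
  fixes a x :: real
  assumes "0 < x" "0 < a" "a \<le> 1"
  shows "0 \<le> ln (1 + 1/x) - a * ln (1 + 1/(a*x))"
proof -
  have "a * x \<le> x"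
    using assms mult_right_mono[of a 1 x] by simp
  then have "(a*x) * ln (1 + 1/(a*x)) \<le> x * ln (1 + 1/x)"
    using assms by (intro times_ln_one_plus_inverse_mono) auto
  then have "x * (a * ln (1 + 1/(a*x))) \<le> x * ln (1 + 1/x)"
    by (simp add: algebra_simps)
  with assms(1) show ?thesis by simp
qed

text \<open>Taylor bounds at \<open>u = 1/x\<close>: the derivative is at most
  \<open>(1/a - 1) u\<^sup>2/2 + u\<^sup>3/3\<close>, and \<open>u\<^sup>3/3 \<le> u\<^sup>2/6\<close> once \<open>x \<ge> 2\<close>.\<close>
lemma g_gap_derivative_le:
  fixes a x :: real
  assumes "2 \<le> x" "0 < a" "a \<le> 1"
  shows "ln (1 + 1/x) - a * ln (1 + 1/(a*x)) \<le> 2/(3*a*x^2)"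
proof -
  have x: "0 < x" using assms(1) by simp
  have upper: "ln (1 + 1/x) \<le> 1/x - (1/x)^2/2 + (1/x)^3/3"
    using ln_one_plus_le_cubic[of "1/x"] x by simp
  have "1/(a*x) - (1/(a*x))^2/2 \<le> ln (1 + 1/(a*x))"
    using ln_one_plus_ge_quadratic[of "1/(a*x)"] x assms(2) by simp
  then have "a * (1/(a*x) - (1/(a*x))^2/2) \<le> a * ln (1 + 1/(a*x))"
    using assms(2) by simp
  also have "a * (1/(a*x) - (1/(a*x))^2/2) = 1/x - 1/(2*a*x^2)"
    using assms(2) x by (simp add: field_simps power2_eq_square)
  finally have lower: "1/x - 1/(2*a*x^2) \<le> a * ln (1 + 1/(a*x))" .
  have "ln (1 + 1/x) - a * ln (1 + 1/(a*x))
      \<le> 1/x - (1/x)^2/2 + (1/x)^3/3 - (1/x - 1/(2*a*x^2))"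
    using upper lower by linarith
  also have "\<dots> = (3*x - 3*a*x + 2*a) / (6*a*x^3)"
    using assms(2) x by (simp add: field_simps power2_eq_square power3_eq_cube)
  also have "\<dots> \<le> (4*x) / (6*a*x^3)"
  proof (rule divide_right_mono)
    have "0 \<le> a * x" using assms(2) x by simp
    then show "3*x - 3*a*x + 2*a \<le> 4*x" using assms by linarith
  qed (use assms(2) x in simp)
  also have "\<dots> = 2/(3*a*x^2)"
    using assms(2) x by (simp add: field_simps power2_eq_square power3_eq_cube)
  finally show ?thesis .
qed

lemma g_gap_mono:
  fixes a x y :: real
  assumes "0 < a" "a \<le> 1" "0 < x" "x \<le> y"
  shows "g_gap a x \<le> g_gap a y"
proof (rule DERIV_nonneg_imp_nondecreasing[OF assms(4)])
  fix t assume "x \<le> t" "t \<le> y"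
  with assms have t: "0 < t" by simp
  show "\<exists>d. (g_gap a has_real_derivative d) (at t) \<and> 0 \<le> d"
    using g_gap_has_real_derivative[OF t assms(1)] g_gap_derivative_nonneg[OF t assms(1,2)]
    by blast
qed

text \<open>Integrating the derivative bound: \<open>g_gap a x + 2/(3 a x)\<close> is nonincreasing on \<open>[2, \<infinity>)\<close>.\<close>
lemma g_gap_increment_le:
  fixes a M N :: real
  assumes "0 < a" "a \<le> 1" "2 \<le> M" "M \<le> N"
  shows "g_gap a N - g_gap a M \<le> 2/(3*a*M)"
proof -
  define c where "c = 2/(3*a)"
  let ?F = "\<lambda>x. g_gap a x + c * inverse x"
  have "?F N \<le> ?F M"
  proof (rule DERIV_nonpos_imp_nonincreasing[OF assms(4)])
    fix x assume "M \<le> x" "x \<le> N"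
    with assms have x: "2 \<le> x" by simp
    then have "0 < x" by simp
    have "(?F has_real_derivative
            (ln (1 + 1/x) - a * ln (1 + 1/(a*x))) + c * (- (inverse x ^ 2))) (at x)"
      using g_gap_has_real_derivative[OF \<open>0 < x\<close> assms(1)] \<open>0 < x\<close>
      by (auto intro!: derivative_eq_intros simp: power2_eq_square)
    moreover have "c * inverse x ^ 2 = 2/(3*a*x^2)"
      unfolding c_def by (simp add: field_simps power2_eq_square)
    ultimately show "\<exists>d. (?F has_real_derivative d) (at x) \<and> d \<le> 0"
      using g_gap_derivative_le[OF x assms(1,2)] by fastforce
  qed
  moreover have "0 \<le> c * inverse N"
    using assms unfolding c_def by simp
  moreover have "c * inverse M = 2/(3*a*M)"
    unfolding c_def by (simp add: field_simps)
  ultimately show ?thesis by linarith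
qed

lemma g_gap_diff_le:
  fixes a M N :: real
  assumes "0 < a" "a \<le> 1" "0 < N" "2 \<le> M"
  shows "g_gap a N - g_gap a M \<le> 2/(3*a*M)"
proof (cases "M \<le> N")
  case True
  then show ?thesis using g_gap_increment_le assms by blast
next
  case False
  then have "g_gap a N \<le> g_gap a M"
    using g_gap_mono assms by simp
  moreover have "0 \<le> 2/(3*a*M)"
    using assms by simp
  ultimately show ?thesis by linarith
qed

lemma g2_eq_g_div_ln2: "g2 x = g x / ln 2"
  unfolding g2_def g_def log_def by (simp add: field_simps)

theorem proposition4:
  fixes eta NS :: real
  assumes "0 \<le> eta" and "eta < 1" and "NS > 0"
  shows "(\<forall>lam::real. 0 < lam \<and> lam \<le> 1 \<and> lam * (1 - eta) * NS \<ge> 2 \<longrightarrow>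
            (g NS + g (eta * NS) - g ((1 - eta) * NS))
          - (g (lam * NS) + g (eta * NS) - g ((1 - eta) * lam * NS))
          \<le> 5 / (6 * lam * NS * (1 - eta)))
       \<and> (\<forall>eps::real. eps > 0 \<longrightarrow>
            (let lam = 5 / (6 * eps * NS * (1 - eta) * ln 2) in
              lam * (1 - eta) * NS \<ge> 2 \<longrightarrow>
                (g2 NS + g2 (eta * NS) - g2 ((1 - eta) * NS))
              - (g2 (lam * NS) + g2 (eta * NS) - g2 ((1 - eta) * lam * NS))
              \<le> eps))"
proof -
  define a where "a = 1 - eta"
  have a: "0 < a" "a \<le> 1" using assms unfolding a_def by auto
  have rate_gap: "(g NS + g (eta * NS) - g (a * NS))
                - (g (lam * NS) + g (eta * NS) - g (a * lam * NS))
                \<le> 5 / (6 * lam * NS * a)"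
    if "0 < lam" "lam * a * NS \<ge> 2" for lam
  proof -
    have "lam * a * NS \<le> lam * NS"
      using that a assms(3) by (simp add: mult_le_cancel_left1 mult_ac)
    with that have "2 \<le> lam * NS" by linarith
    then have "g_gap a NS - g_gap a (lam * NS) \<le> 2/(3*a*(lam*NS))"
      using g_gap_diff_le a assms(3) by blast
    also have "\<dots> \<le> 5 / (6 * lam * NS * a)"
      using a that assms(3) by (simp add: field_simps)
    finally show ?thesis
      unfolding g_gap_def by (simp add: mult_ac)
  qed
  have "(g2 NS + g2 (eta * NS) - g2 (a * NS))
      - (g2 (lam * NS) + g2 (eta * NS) - g2 (a * lam * NS)) \<le> eps"
    if "0 < eps" "lam = 5 / (6 * eps * NS * a * ln 2)" "lam * a * NS \<ge> 2" for eps lam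
  proof -
    have "0 < lam" using that a assms(3) by simp
    have "5 / (6 * lam * NS * a) = eps * ln 2"
      using that a assms(3) \<open>0 < lam\<close> by (simp add: field_simps)
    with rate_gap[OF \<open>0 < lam\<close> that(3)]
    have "((g NS + g (eta * NS) - g (a * NS))
        - (g (lam * NS) + g (eta * NS) - g (a * lam * NS))) / ln 2 \<le> eps"
      by (simp add: pos_divide_le_eq)
    then show ?thesis
      unfolding g2_eq_g_div_ln2 by (simp add: diff_divide_distrib add_divide_distrib)
  qed
  with rate_gap show ?thesis
    unfolding a_def Let_def by simp
qed

end
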